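(* Assume every $\nabla f_j$ and $\nabla g_i$ is Lipschitz continuous on $\mathbb{R}^n$ with Lipschitz constant $L$. Consider iteration $k$ of the SQP algorithm, and suppose the solution $(t^k,d^k)$ of $QP(x^k)$ satisfies $d^k\neq 0$ and $\sigma_{k+1}$ has been computed by Step 3. Then there exists $\bar\alpha>0$ such that for every $\alpha\in(0,\bar\alpha]$, $\Psi_{j,\sigma_{k+1}}(x^k+\alpha d^k)-\Psi_{j,\sigma_{k+1}}(x^k)\le \alpha\beta\,\theta_{j,\sigma_{k+1}}(x^k;d^k)$ for all $j=1,\dots,m$.
   Context: $f_j,g_i:\mathbb{R}^n\to\mathbb{R}$ ($j=1,\dots,m$, $i=1,\dots,p$) are continuously differentiable. $\Phi(x)=\max\{0,g_1(x),\dots,g_p(x)\}$; $I(x)=\{i: g_i(x)=\Phi(x)\}$; $\Phi^*(x;d)=\max\{\max_{i\in I(x)}(g_i(x)+\nabla g_i(x)^Td),0\}-\Phi(x)$; $\Psi_{j,\sigma}(x)=f_j(x)+\sigma\Phi(x)$; $\theta_{j,\sigma}(x;d)=\nabla f_j(x)^Td+\sigma\Phi^*(x;d)$. $QP(x)$: minimize $t+\frac12 d^Td$ over $(t,d)\in\mathbb{R}\times\mathbb{R}^n$ subject to $\nabla f_j(x)^Td\le t$ for all $j$ and $g_i(x)+\nabla g_i(x)^Td\le t$ for all $i$ (unique solution). SQP algorithm: choose $x^0\in\mathbb{R}^n$, $r\in(0,1)$, $\beta\in(0,1)$, $\sigma_0>0$; set $k=0$. Step 2: let $(t^k,d^k)$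 solve $QP(x^k)$; stop if $d^k=0$. Step 3: if $\Phi(x^k)=0$ or $\theta_{j,\sigma_k}(x^k;d^k)\le-\frac12 (d^k)^Td^k$ for all $j$, set $\sigma_{k+1}=\sigma_k$; otherwise set $\sigma_{k+1}=\max\{2\sigma_k,\ (\nabla f_j(x^k)^Td^k+\frac12(d^k)^Td^k)/(-\Phi^*(x^k;d^k)),\ j=1,\dots,m\}$. Step 4: let $\alpha_k$ be the first number in $\{1,r,r^2,\dots\}$ with $\Psi_{j,\sigma_{k+1}}(x^k+\alpha_kd^k)-\Psi_{j,\sigma_{k+1}}(x^k)\le\alpha_k\beta\,\theta_{j,\sigma_{k+1}}(x^k;d^k)$ for all $j$. Step 5: $x^{k+1}=x^k+\alpha_kd^k$, $k:=k+1$, go to Step 2. *)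

theory Defs
  imports "HOL-Analysis.Analysis"
begin

text \<open>Objectives f j (j = 1..m), constraints g i (i = 1..p) on real^'n, with gradient
  functions gf j and gg i.\<close>

definition Phi :: "nat \<Rightarrow> (nat \<Rightarrow> real^'n \<Rightarrow> real) \<Rightarrow> real^'n \<Rightarrow> real" where
  "Phi p g x = Max (insert 0 {g i x | i. i \<in> {1..p}})"

definition Iact :: "nat \<Rightarrow> (nat \<Rightarrow> real^'n \<Rightarrow> real) \<Rightarrow> real^'n \<Rightarrow> nat set" where
  "Iact p g x = {i \<in> {1..p}. g i x = Phi p g x}"

definition Phistar :: "nat \<Rightarrow> (nat \<Rightarrow> real^'n \<Rightarrow> real) \<Rightarrow> (nat \<Rightarrow> real^'n \<Rightarrow> real^'n)
    \<Rightarrow> real^'n \<Rightarrow> real^'n \<Rightarrow> real" where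
  "Phistar p g gg x d =
     Max (insert 0 {g i x + gg i x \<bullet> d | i. i \<in> Iact p g x}) - Phi p g x"

definition Psi :: "nat \<Rightarrow> (nat \<Rightarrow> real^'n \<Rightarrow> real) \<Rightarrow> (nat \<Rightarrow> real^'n \<Rightarrow> real) \<Rightarrow> nat
    \<Rightarrow> real \<Rightarrow> real^'n \<Rightarrow> real" where
  "Psi p f g j \<sigma> x = f j x + \<sigma> * Phi p g x"

definition theta :: "nat \<Rightarrow> (nat \<Rightarrow> real^'n \<Rightarrow> real^'n) \<Rightarrow> (nat \<Rightarrow> real^'n \<Rightarrow> real)
    \<Rightarrow> (nat \<Rightarrow> real^'n \<Rightarrow> real^'n) \<Rightarrow> nat \<Rightarrow> real \<Rightarrow> real^'n \<Rightarrow> real^'n \<Rightarrow> real" where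
  "theta p gf g gg j \<sigma> x d = gf j x \<bullet> d + \<sigma> * Phistar p g gg x d"

definition QP_feasible :: "nat \<Rightarrow> nat \<Rightarrow> (nat \<Rightarrow> real^'n \<Rightarrow> real^'n) \<Rightarrow> (nat \<Rightarrow> real^'n \<Rightarrow> real)
    \<Rightarrow> (nat \<Rightarrow> real^'n \<Rightarrow> real^'n) \<Rightarrow> real^'n \<Rightarrow> real \<Rightarrow> real^'n \<Rightarrow> bool" where
  "QP_feasible m p gf g gg x t d \<longleftrightarrow>
     (\<forall>j\<in>{1..m}. gf j x \<bullet> d \<le> t) \<and> (\<forall>i\<in>{1..p}. g i x + gg i x \<bullet> d \<le> t)"

definition QP_solution :: "nat \<Rightarrow> nat \<Rightarrow> (nat \<Rightarrow> real^'n \<Rightarrow> real^'n) \<Rightarrow> (nat \<Rightarrow> real^'n \<Rightarrow> real)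
    \<Rightarrow> (nat \<Rightarrow> real^'n \<Rightarrow> real^'n) \<Rightarrow> real^'n \<Rightarrow> real \<Rightarrow> real^'n \<Rightarrow> bool" where
  "QP_solution m p gf g gg x t d \<longleftrightarrow>
     QP_feasible m p gf g gg x t d \<and>
     (\<forall>t' d'. QP_feasible m p gf g gg x t' d' \<longrightarrow> t + (1/2) * (d \<bullet> d) \<le> t' + (1/2) * (d' \<bullet> d'))"

definition sigma_update :: "nat \<Rightarrow> nat \<Rightarrow> (nat \<Rightarrow> real^'n \<Rightarrow> real^'n) \<Rightarrow> (nat \<Rightarrow> real^'n \<Rightarrow> real)
    \<Rightarrow> (nat \<Rightarrow> real^'n \<Rightarrow> real^'n) \<Rightarrow> real^'n \<Rightarrow> real^'n \<Rightarrow> real \<Rightarrow> real" where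
  "sigma_update m p gf g gg x d \<sigma> =
     (if Phi p g x = 0 \<or> (\<forall>j\<in>{1..m}. theta p gf g gg j \<sigma> x d \<le> - (1/2) * (d \<bullet> d))
      then \<sigma>
      else Max (insert (2 * \<sigma>)
             {(gf j x \<bullet> d + (1/2) * (d \<bullet> d)) / (- Phistar p g gg x d) | j. j \<in> {1..m}}))"

end

theory Submission
  imports Defs
begin

text \<open>Along the direction \<open>d\<close>, the smooth parts are bounded by their linearizations plus
  a quadratic term \<open>L \<alpha>\<^sup>2 \<parallel>d\<parallel>\<^sup>2\<close> (descent lemma). For the penalty \<open>\<Phi>\<close>, active constraints obey
  \<open>g\<^sub>i(x + \<alpha> d) \<le> (1 - \<alpha>) \<Phi>(x) + \<alpha> (\<Phi>(x) + \<Phi>\<^sup>*(x;d)) + O(\<alpha>\<^sup>2)\<close>, while inactive ones keep a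
  strict slack for small \<open>\<alpha>\<close>; hence \<open>\<Psi>\<^sub>j\<close> decreases at least by \<open>\<alpha> \<theta>\<^sub>j - O(\<alpha>\<^sup>2)\<close>.
  The QP optimality, compared with the feasible point \<open>(\<Phi>(x), 0)\<close>, and the update rule of
  Step 3 make \<open>\<theta>\<^sub>j \<le> -\<parallel>d\<parallel>\<^sup>2/2 < 0\<close>, so the quadratic term is absorbed for small \<open>\<alpha>\<close>.\<close>

lemma gderiv_lipschitz_descent:
  fixes h :: "'a::real_inner \<Rightarrow> real" and gh :: "'a \<Rightarrow> 'a"
  assumes grad: "\<And>y. GDERIV h y :> gh y"
    and lip: "L-lipschitz_on UNIV gh"
    and "0 \<le> \<alpha>"
  shows "h (x + \<alpha> *\<^sub>R d) \<le> h x + \<alpha> * (gh x \<bullet> d) + L * \<alpha>\<^sup>2 * (d \<bullet> d)"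
proof (cases "\<alpha> = 0")
  case True
  then show ?thesis by simp
next
  case False
  with \<open>0 \<le> \<alpha>\<close> have "0 < \<alpha>" by simp
  have "DERIV (\<lambda>s. h (x + s *\<^sub>R d)) s :> gh (x + s *\<^sub>R d) \<bullet> d" for s
  proof -
    have "((\<lambda>s. x + s *\<^sub>R d) has_derivative (\<lambda>s. s *\<^sub>R d)) (at s)"
      by (auto intro!: derivative_eq_intros)
    moreover have "(h has_derivative (\<lambda>v. v \<bullet> gh (x + s *\<^sub>R d))) (at (x + s *\<^sub>R d))"
      using grad by (simp add: gderiv_def)
    ultimately have "((\<lambda>s. h (x + s *\<^sub>R d)) has_derivative (\<lambda>v. (v *\<^sub>R d) \<bullet> gh (x + s *\<^sub>R d))) (at s)"
      using has_derivative_compose by (fastforce simp: o_def)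
    moreover have "(\<lambda>v. (v *\<^sub>R d) \<bullet> gh (x + s *\<^sub>R d)) = (*) (gh (x + s *\<^sub>R d) \<bullet> d)"
      by (auto simp: inner_commute)
    ultimately show ?thesis
      by (simp add: has_field_derivative_def)
  qed
  from MVT2[OF \<open>0 < \<alpha>\<close> this] obtain z where z: "0 < z" "z < \<alpha>"
    and mvt: "h (x + \<alpha> *\<^sub>R d) - h x = \<alpha> * (gh (x + z *\<^sub>R d) \<bullet> d)"
    by auto
  have "gh (x + z *\<^sub>R d) \<bullet> d - gh x \<bullet> d \<le> norm (gh (x + z *\<^sub>R d) - gh x) * norm d"
    unfolding inner_diff_left[symmetric] by (rule order_trans[OF abs_ge_self Cauchy_Schwarz_ineq2])
  also have "\<dots> \<le> L * (z * norm d) * norm d"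
    using lipschitz_onD[OF lip, of "x + z *\<^sub>R d" x] z by (simp add: dist_norm mult_right_mono)
  also have "\<dots> \<le> L * \<alpha> * (d \<bullet> d)"
  proof -
    have "L * z \<le> L * \<alpha>"
      using z lipschitz_on_nonneg[OF lip] by (simp add: mult_left_mono)
    then have "L * z * (norm d)\<^sup>2 \<le> L * \<alpha> * (norm d)\<^sup>2"
      by (rule mult_right_mono) simp
    then show ?thesis
      by (simp add: power2_norm_eq_inner[symmetric] power2_eq_square algebra_simps)
  qed
  finally have "\<alpha> * (gh (x + z *\<^sub>R d) \<bullet> d) \<le> \<alpha> * (gh x \<bullet> d + L * \<alpha> * (d \<bullet> d))"
    using \<open>0 < \<alpha>\<close> by (simp add: mult_left_mono)
  with mvt show ?thesis by (simp add: algebra_simps power2_eq_square)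
qed

lemma Phi_eq_Max: "Phi p g x = Max (insert 0 ((\<lambda>i. g i x) ` {1..p}))"
  unfolding Phi_def by (rule arg_cong[where f = "\<lambda>S. Max (insert 0 S)"]) blast

lemma Phi_nonneg: "0 \<le> Phi p g x"
  unfolding Phi_eq_Max by (rule Max_ge) auto

lemma Phi_ge: "i \<in> {1..p} \<Longrightarrow> g i x \<le> Phi p g x"
  unfolding Phi_eq_Max by (rule Max_ge) auto

lemma Phi_le: "0 \<le> c \<Longrightarrow> (\<And>i. i \<in> {1..p} \<Longrightarrow> g i x \<le> c) \<Longrightarrow> Phi p g x \<le> c"
  unfolding Phi_eq_Max by (subst Max_le_iff) auto

lemma finite_Iact: "finite (Iact p g x)"
  by (rule finite_subset[of _ "{1..p}"]) (auto simp: Iact_def)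

lemma Phistar_add_Phi_eq_Max:
  "Phistar p g gg x d + Phi p g x = Max (insert 0 ((\<lambda>i. g i x + gg i x \<bullet> d) ` Iact p g x))"
  unfolding Phistar_def by (simp only: diff_add_cancel) (rule arg_cong[where f = "\<lambda>S. Max (insert 0 S)"], blast)

lemma Phistar_add_Phi_nonneg: "0 \<le> Phistar p g gg x d + Phi p g x"
  unfolding Phistar_add_Phi_eq_Max by (rule Max_ge) (auto simp: finite_Iact)

lemma Phistar_add_Phi_ge:
  "i \<in> Iact p g x \<Longrightarrow> g i x + gg i x \<bullet> d \<le> Phistar p g gg x d + Phi p g x"
  unfolding Phistar_add_Phi_eq_Max by (rule Max_ge) (auto simp: finite_Iact)

lemma Phistar_add_Phi_le:
  "0 \<le> c \<Longrightarrow> (\<And>i. i \<in> Iact p g x \<Longrightarrow> g i x + gg i x \<bullet> d \<le> c)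
    \<Longrightarrow> Phistar p g gg x d + Phi p g x \<le> c"
  unfolding Phistar_add_Phi_eq_Max by (subst Max_le_iff) (auto simp: finite_Iact)

lemma constraint_linearization_bound:
  fixes g :: "nat \<Rightarrow> real^'n \<Rightarrow> real" and gg :: "nat \<Rightarrow> real^'n \<Rightarrow> real^'n"
  assumes i: "i \<in> {1..p}"
    and grad: "\<And>y. GDERIV (g i) y :> gg i y"
    and lip: "L-lipschitz_on UNIV (gg i)"
  shows "\<forall>\<^sub>F \<alpha> in at_right 0. g i (x + \<alpha> *\<^sub>R d) \<le>
           (1 - \<alpha>) * Phi p g x + \<alpha> * (Phistar p g gg x d + Phi p g x) + L * \<alpha>\<^sup>2 * (d \<bullet> d)"
proof -
  define \<Phi> where "\<Phi> = Phi p g x"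
  define M where "M = Phistar p g gg x d + Phi p g x"
  have small: "\<forall>\<^sub>F \<alpha> in at_right (0::real). 0 < \<alpha> \<and> \<alpha> \<le> 1"
    unfolding eventually_at_right_field by (intro exI[of _ 1]) auto
  have descent: "g i (x + \<alpha> *\<^sub>R d) \<le> g i x + \<alpha> * (gg i x \<bullet> d) + L * \<alpha>\<^sup>2 * (d \<bullet> d)"
    if "0 \<le> \<alpha>" for \<alpha>
    using gderiv_lipschitz_descent[OF grad lip that] .
  have "\<forall>\<^sub>F \<alpha> in at_right 0. g i (x + \<alpha> *\<^sub>R d) \<le> (1 - \<alpha>) * \<Phi> + \<alpha> * M + L * \<alpha>\<^sup>2 * (d \<bullet> d)"
  proof (cases "i \<in> Iact p g x")
    case True
    then have active: "g i x = \<Phi>" "g i x + gg i x \<bullet> d \<le> M"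
      using Phistar_add_Phi_ge[OF True] by (auto simp: Iact_def \<Phi>_def M_def)
    show "\<forall>\<^sub>F \<alpha> in at_right 0. g i (x + \<alpha> *\<^sub>R d) \<le> (1 - \<alpha>) * \<Phi> + \<alpha> * M + L * \<alpha>\<^sup>2 * (d \<bullet> d)"
      using small
    proof eventually_elim
      case (elim \<alpha>)
      then have "\<alpha> * (g i x + gg i x \<bullet> d) \<le> \<alpha> * M"
        using active by (simp add: mult_left_mono)
      with elim active descent[of \<alpha>] show ?case by (simp add: algebra_simps)
    qed
  next
    case False
    then have slack: "0 < \<Phi> - g i x"
      using i Phi_ge[OF i, of g x] by (auto simp: Iact_def \<Phi>_def)
    have "((\<lambda>\<alpha>. \<Phi> - g i x + \<alpha> * (M - \<Phi> - gg i x \<bullet> d)) \<longlongrightarrow> \<Phi> - g i x) (at_right 0)"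
      by (auto intro!: tendsto_eq_intros)
    then have "\<forall>\<^sub>F \<alpha> in at_right 0. 0 < \<Phi> - g i x + \<alpha> * (M - \<Phi> - gg i x \<bullet> d)"
      using slack by (rule order_tendstoD)
    then show "\<forall>\<^sub>F \<alpha> in at_right 0. g i (x + \<alpha> *\<^sub>R d) \<le> (1 - \<alpha>) * \<Phi> + \<alpha> * M + L * \<alpha>\<^sup>2 * (d \<bullet> d)"
      using small
    proof eventually_elim
      case (elim \<alpha>)
      with descent[of \<alpha>] show ?case by (simp add: algebra_simps)
    qed
  qed
  then show ?thesis by (simp add: \<Phi>_def M_def)
qed

lemma Phi_linearization_bound:
  fixes g :: "nat \<Rightarrow> real^'n \<Rightarrow> real" and gg :: "nat \<Rightarrow> real^'n \<Rightarrow> real^'n"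
  assumes grad: "\<And>i y. i \<in> {1..p} \<Longrightarrow> GDERIV (g i) y :> gg i y"
    and lip: "\<And>i. i \<in> {1..p} \<Longrightarrow> L-lipschitz_on UNIV (gg i)"
    and "0 \<le> L"
  shows "\<forall>\<^sub>F \<alpha> in at_right 0.
           Phi p g (x + \<alpha> *\<^sub>R d) \<le> Phi p g x + \<alpha> * Phistar p g gg x d + L * \<alpha>\<^sup>2 * (d \<bullet> d)"
proof -
  define B where "B \<alpha> = (1 - \<alpha>) * Phi p g x + \<alpha> * (Phistar p g gg x d + Phi p g x)
    + L * \<alpha>\<^sup>2 * (d \<bullet> d)" for \<alpha>
  have "\<forall>\<^sub>F \<alpha> in at_right 0. \<forall>i\<in>{1..p}. g i (x + \<alpha> *\<^sub>R d) \<le> B \<alpha>"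
    unfolding B_def
    by (intro eventually_ball_finite ballI constraint_linearization_bound grad lip) auto
  moreover have "\<forall>\<^sub>F \<alpha> in at_right (0::real). 0 < \<alpha> \<and> \<alpha> \<le> 1"
    unfolding eventually_at_right_field by (intro exI[of _ 1]) auto
  ultimately show ?thesis
  proof eventually_elim
    case (elim \<alpha>)
    then have "0 \<le> (1 - \<alpha>) * Phi p g x" "0 \<le> \<alpha> * (Phistar p g gg x d + Phi p g x)"
      by (auto intro: mult_nonneg_nonneg Phi_nonneg Phistar_add_Phi_nonneg)
    then have "0 \<le> B \<alpha>"
      using \<open>0 \<le> L\<close> by (simp add: B_def)
    with elim have "Phi p g (x + \<alpha> *\<^sub>R d) \<le> B \<alpha>"
      by (intro Phi_le) auto
    then show ?case by (simp add: B_def algebra_simps)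
  qed
qed

lemma QP_solution_feasible:
  assumes "QP_solution m p gf g gg x t d"
  shows "\<And>j. j \<in> {1..m} \<Longrightarrow> gf j x \<bullet> d \<le> t"
    and "\<And>i. i \<in> {1..p} \<Longrightarrow> g i x + gg i x \<bullet> d \<le> t"
  using assms by (simp_all add: QP_solution_def QP_feasible_def)

lemma QP_solution_le_Phi:
  assumes "QP_solution m p gf g gg x t d"
  shows "t + (1/2) * (d \<bullet> d) \<le> Phi p g x"
proof -
  have "QP_feasible m p gf g gg x (Phi p g x) 0"
    using Phi_ge[of _ p g x] Phi_nonneg[of p g x] by (auto simp: QP_feasible_def)
  with assms show ?thesis
    unfolding QP_solution_def by fastforce
qed

lemma QP_solution_Phistar_add_Phi_le:
  assumes "QP_solution m p gf g gg x t d"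
  shows "Phistar p g gg x d + Phi p g x \<le> max 0 t"
proof (rule Phistar_add_Phi_le)
  fix i assume "i \<in> Iact p g x"
  then have "i \<in> {1..p}" by (simp add: Iact_def)
  with QP_solution_feasible(2)[OF assms] show "g i x + gg i x \<bullet> d \<le> max 0 t"
    by fastforce
qed simp

lemma QP_solution_Phi_zero:
  assumes qp: "QP_solution m p gf g gg x t d" and "d \<noteq> 0" and "Phi p g x = 0"
  shows "Phistar p g gg x d = 0" and "\<And>j. j \<in> {1..m} \<Longrightarrow> gf j x \<bullet> d \<le> - (1/2) * (d \<bullet> d)"
proof -
  have "0 < d \<bullet> d" using \<open>d \<noteq> 0\<close> by simp
  moreover have "t \<le> - (1/2) * (d \<bullet> d)"
    using QP_solution_le_Phi[OF qp] \<open>Phi p g x = 0\<close> by simp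
  ultimately have "t < 0" by linarith
  then show "Phistar p g gg x d = 0"
    using QP_solution_Phistar_add_Phi_le[OF qp] Phistar_add_Phi_nonneg[of p g gg x d]
      \<open>Phi p g x = 0\<close> by simp
  show "gf j x \<bullet> d \<le> - (1/2) * (d \<bullet> d)" if "j \<in> {1..m}" for j
    using QP_solution_feasible(1)[OF qp that] \<open>t \<le> - (1/2) * (d \<bullet> d)\<close> by linarith
qed

lemma QP_solution_Phistar_neg:
  assumes qp: "QP_solution m p gf g gg x t d" and "d \<noteq> 0" and "Phi p g x \<noteq> 0"
  shows "Phistar p g gg x d < 0"
proof -
  have "0 < d \<bullet> d" using \<open>d \<noteq> 0\<close> by simp
  with QP_solution_le_Phi[OF qp] have "t < Phi p g x" by linarith
  then have "max 0 t < Phi p g x"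
    using \<open>Phi p g x \<noteq> 0\<close> Phi_nonneg[of p g x] by auto
  with QP_solution_Phistar_add_Phi_le[OF qp] show ?thesis by linarith
qed

text \<open>Step 3 enforces \<open>\<theta>\<^sub>j \<le> -\<parallel>d\<parallel>\<^sup>2/2\<close>: when it enlarges \<open>\<sigma>\<close>, the new value dominates every
  quotient \<open>(\<nabla>f\<^sub>j\<^sup>T d + \<parallel>d\<parallel>\<^sup>2/2) / (-\<Phi>\<^sup>*)\<close>, whose denominator is positive by the QP optimality.\<close>

lemma sigma_update_sufficient_descent:
  assumes qp: "QP_solution m p gf g gg x t d" and "d \<noteq> 0" and "0 < \<sigma>"
  defines "\<sigma>' \<equiv> sigma_update m p gf g gg x d \<sigma>"
  shows "0 < \<sigma>'" and "\<And>j. j \<in> {1..m} \<Longrightarrow> theta p gf g gg j \<sigma>' x d \<le> - (1/2) * (d \<bullet> d)"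
proof -
  have "0 < \<sigma>' \<and> (\<forall>j\<in>{1..m}. theta p gf g gg j \<sigma>' x d \<le> - (1/2) * (d \<bullet> d))"
  proof (cases "Phi p g x = 0 \<or> (\<forall>j\<in>{1..m}. theta p gf g gg j \<sigma> x d \<le> - (1/2) * (d \<bullet> d))")
    case True
    then have "\<sigma>' = \<sigma>" by (simp add: \<sigma>'_def sigma_update_def)
    with True \<open>0 < \<sigma>\<close> show ?thesis
      using QP_solution_Phi_zero[OF qp \<open>d \<noteq> 0\<close>] by (auto simp: theta_def)
  next
    case False
    define S where "S = {(gf j x \<bullet> d + (1/2) * (d \<bullet> d)) / (- Phistar p g gg x d) | j. j \<in> {1..m}}"
    have \<sigma>': "\<sigma>' = Max (insert (2 * \<sigma>) S)"
      unfolding \<sigma>'_def sigma_update_def S_def by (rule if_not_P[OF False])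
    have "finite S" by (simp add: S_def setcompr_eq_image)
    have "Phistar p g gg x d < 0"
      using False QP_solution_Phistar_neg[OF qp \<open>d \<noteq> 0\<close>] by blast
    have "theta p gf g gg j \<sigma>' x d \<le> - (1/2) * (d \<bullet> d)" if "j \<in> {1..m}" for j
    proof -
      have "(gf j x \<bullet> d + (1/2) * (d \<bullet> d)) / (- Phistar p g gg x d) \<le> \<sigma>'"
        unfolding \<sigma>' using \<open>finite S\<close> that by (intro Max_ge) (auto simp: S_def)
      then have "gf j x \<bullet> d + (1/2) * (d \<bullet> d) \<le> \<sigma>' * (- Phistar p g gg x d)"
        using \<open>Phistar p g gg x d < 0\<close> by (subst (asm) pos_divide_le_eq) auto
      then show ?thesis
        by (simp add: theta_def algebra_simps)
    qed
    moreover have "2 * \<sigma> \<le> \<sigma>'" unfolding \<sigma>' using \<open>finite S\<close> by simp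
    ultimately show ?thesis using \<open>0 < \<sigma>\<close> by auto
  qed
  then show "0 < \<sigma>'" "\<And>j. j \<in> {1..m} \<Longrightarrow> theta p gf g gg j \<sigma>' x d \<le> - (1/2) * (d \<bullet> d)"
    by auto
qed

lemma Psi_linearization_bound:
  fixes f g :: "nat \<Rightarrow> real^'n \<Rightarrow> real" and gf gg :: "nat \<Rightarrow> real^'n \<Rightarrow> real^'n"
  assumes grad_f: "\<And>y. GDERIV (f j) y :> gf j y"
    and lip_f: "L-lipschitz_on UNIV (gf j)"
    and grad_g: "\<And>i y. i \<in> {1..p} \<Longrightarrow> GDERIV (g i) y :> gg i y"
    and lip_g: "\<And>i. i \<in> {1..p} \<Longrightarrow> L-lipschitz_on UNIV (gg i)"
    and "0 \<le> \<sigma>"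
  shows "\<forall>\<^sub>F \<alpha> in at_right 0. Psi p f g j \<sigma> (x + \<alpha> *\<^sub>R d) - Psi p f g j \<sigma> x
           \<le> \<alpha> * theta p gf g gg j \<sigma> x d + \<alpha>\<^sup>2 * ((1 + \<sigma>) * L * (d \<bullet> d))"
proof -
  have "\<forall>\<^sub>F \<alpha> in at_right 0.
      Phi p g (x + \<alpha> *\<^sub>R d) \<le> Phi p g x + \<alpha> * Phistar p g gg x d + L * \<alpha>\<^sup>2 * (d \<bullet> d)"
    using grad_g lip_g lipschitz_on_nonneg[OF lip_f] by (rule Phi_linearization_bound)
  with eventually_at_right_less[of 0] show ?thesis
  proof eventually_elim
    case (elim \<alpha>)
    have "\<sigma> * Phi p g (x + \<alpha> *\<^sub>R d)
        \<le> \<sigma> * Phi p g x + \<sigma> * (\<alpha> * Phistar p g gg x d + L * \<alpha>\<^sup>2 * (d \<bullet> d))"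
      using mult_left_mono[OF elim(2) \<open>0 \<le> \<sigma>\<close>] by (simp only: distrib_left add.assoc)
    moreover have "f j (x + \<alpha> *\<^sub>R d) \<le> f j x + \<alpha> * (gf j x \<bullet> d) + L * \<alpha>\<^sup>2 * (d \<bullet> d)"
      by (rule gderiv_lipschitz_descent[OF grad_f lip_f]) (use elim(1) in simp)
    moreover have "\<alpha> * theta p gf g gg j \<sigma> x d + \<alpha>\<^sup>2 * ((1 + \<sigma>) * L * (d \<bullet> d))
        = \<alpha> * (gf j x \<bullet> d) + L * \<alpha>\<^sup>2 * (d \<bullet> d)
          + \<sigma> * (\<alpha> * Phistar p g gg x d + L * \<alpha>\<^sup>2 * (d \<bullet> d))"
      by (simp add: theta_def algebra_simps)
    ultimately show ?case
      unfolding Psi_def by linarith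
  qed
qed

lemma eventually_armijo:
  fixes \<phi> :: "real \<Rightarrow> real"
  assumes bound: "\<forall>\<^sub>F \<alpha> in at_right 0. \<phi> \<alpha> \<le> \<alpha> * \<theta> + \<alpha>\<^sup>2 * C"
    and "\<theta> < 0" and "\<beta> < 1"
  shows "\<forall>\<^sub>F \<alpha> in at_right 0. \<phi> \<alpha> \<le> \<alpha> * \<beta> * \<theta>"
proof -
  have "((\<lambda>\<alpha>. \<alpha> * C) \<longlongrightarrow> 0 * C) (at_right 0)"
    by (intro tendsto_intros)
  then have "\<forall>\<^sub>F \<alpha> in at_right 0. \<alpha> * C < (\<beta> - 1) * \<theta>"
    using \<open>\<theta> < 0\<close> \<open>\<beta> < 1\<close> by (intro order_tendstoD) (auto intro: mult_neg_neg)
  with bound eventually_at_right_less[of 0] show ?thesis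
  proof eventually_elim
    case (elim \<alpha>)
    then have "\<alpha> * (\<alpha> * C) \<le> \<alpha> * ((\<beta> - 1) * \<theta>)"
      by (simp add: mult_left_mono)
    with elim show ?case by (simp add: power2_eq_square algebra_simps)
  qed
qed

lemma eventually_at_right_zero_Ioc:
  assumes "\<forall>\<^sub>F \<alpha> in at_right (0::real). P \<alpha>"
  shows "\<exists>b>0. \<forall>\<alpha>. 0 < \<alpha> \<and> \<alpha> \<le> b \<longrightarrow> P \<alpha>"
proof -
  obtain b where "b > 0" and b: "\<And>\<alpha>. 0 < \<alpha> \<Longrightarrow> \<alpha> < b \<Longrightarrow> P \<alpha>"
    using assms unfolding eventually_at_right_field by auto
  then show ?thesis
    by (intro exI[of _ "b/2"]) auto
qed

theorem mainTheorem3: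
  fixes m p :: nat
    and f g :: "nat \<Rightarrow> real^'n \<Rightarrow> real"
    and gf gg :: "nat \<Rightarrow> real^'n \<Rightarrow> real^'n"
    and L \<beta> \<sigma>k tk :: real
    and xk dk :: "real^'n"
  assumes grad_f: "\<And>j x. j \<in> {1..m} \<Longrightarrow> GDERIV (f j) x :> gf j x"
    and grad_g: "\<And>i x. i \<in> {1..p} \<Longrightarrow> GDERIV (g i) x :> gg i x"
    and lip_f: "\<And>j. j \<in> {1..m} \<Longrightarrow> L-lipschitz_on UNIV (gf j)"
    and lip_g: "\<And>i. i \<in> {1..p} \<Longrightarrow> L-lipschitz_on UNIV (gg i)"
    and beta: "0 < \<beta>" "\<beta> < 1"
    and sigma_pos: "0 < \<sigma>k"
    and qp: "QP_solution m p gf g gg xk tk dk"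
    and dk_nz: "dk \<noteq> 0"
  shows "\<exists>\<alpha>bar>0. \<forall>\<alpha>. 0 < \<alpha> \<and> \<alpha> \<le> \<alpha>bar \<longrightarrow>
           (\<forall>j\<in>{1..m}.
              Psi p f g j (sigma_update m p gf g gg xk dk \<sigma>k) (xk + \<alpha> *\<^sub>R dk)
                - Psi p f g j (sigma_update m p gf g gg xk dk \<sigma>k) xk
              \<le> \<alpha> * \<beta> * theta p gf g gg j (sigma_update m p gf g gg xk dk \<sigma>k) xk dk)"
proof -
  define \<sigma> where "\<sigma> = sigma_update m p gf g gg xk dk \<sigma>k"
  have "\<forall>\<^sub>F \<alpha> in at_right 0. \<forall>j\<in>{1..m}.
      Psi p f g j \<sigma> (xk + \<alpha> *\<^sub>R dk) - Psi p f g j \<sigma> xk \<le> \<alpha> * \<beta> * theta p gf g gg j \<sigma> xk dk"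
  proof (intro eventually_ball_finite ballI)
    fix j assume j: "j \<in> {1..m}"
    have "0 < \<sigma>" and "theta p gf g gg j \<sigma> xk dk \<le> - (1/2) * (dk \<bullet> dk)"
      unfolding \<sigma>_def using sigma_update_sufficient_descent[OF qp dk_nz sigma_pos] j by auto
    moreover have "0 < dk \<bullet> dk" using dk_nz by simp
    ultimately have "theta p gf g gg j \<sigma> xk dk < 0" by linarith
    moreover have "\<forall>\<^sub>F \<alpha> in at_right 0. Psi p f g j \<sigma> (xk + \<alpha> *\<^sub>R dk) - Psi p f g j \<sigma> xk
        \<le> \<alpha> * theta p gf g gg j \<sigma> xk dk + \<alpha>\<^sup>2 * ((1 + \<sigma>) * L * (dk \<bullet> dk))"
      using grad_f[OF j] lip_f[OF j] grad_g lip_g \<open>0 < \<sigma>\<close>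
      by (intro Psi_linearization_bound) auto
    ultimately show "\<forall>\<^sub>F \<alpha> in at_right 0. Psi p f g j \<sigma> (xk + \<alpha> *\<^sub>R dk) - Psi p f g j \<sigma> xk
        \<le> \<alpha> * \<beta> * theta p gf g gg j \<sigma> xk dk"
      using \<open>\<beta> < 1\<close> by (intro eventually_armijo)
  qed simp
  then show ?thesis
    unfolding \<sigma>_def by (rule eventually_at_right_zero_Ioc)
qed

end
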